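(* Let $f,g\in G_B^I$. Then $f\boxtimes g\in G_B^I$ and $f\boxtimes_1 g\in G_B^I$.
   Context: $B$ is a unital algebra over a field $\mathbb K$ of characteristic zero. $\mathrm{Mult}[[B]]$: sequences $f=(f_n)_{n\ge0}$ of multilinear maps $f_n:B^n\to B$; product $(f\cdot g)_n(x_1,\dots,x_n)=\sum_{k=0}^n f_k(x_1,\dots,x_k)g_{n-k}(x_{k+1},\dots,x_n)$; $I=(\delta_{n,1}\mathrm{id}_B)$. $G_B^{\mathrm{inv}}=\{f:f_0\in B^\times\}$, $G_B^{\mathrm{dif}}=\{f:f_0=0,f_1\in GL(B)\}$, $G_B^I=\{I\cdot F:F\in G_B^{\mathrm{inv}}\}$, where $(I\cdot F)_n(x_1,\dots,x_n)=x_1F_{n-1}(x_2,\dots,x_n)$; equivalently $G_B^I=\{f\in G_B^{\mathrm{dif}}: f_1(1)\in B^\times,\ f_n(x_1,\dots,x_n)=x_1f_n(1,x_2,\dots,x_n)\ \forall n\ge1\}$. Planar binary trees: $Y_0=\{|\}$, $Y_n=\{\sigma\vee\tau:\sigma\in Y_k,\tau\in Y_l,k+l=n-1\}$; each $\tau\in Y_n$, $n\ge1$, is uniquely $\tau_1\vee(\tau_2\vee(\cdots\vee(\tau_k\vee|)))$; $j_i=|\tau_1|+\dots+|\tau_i|+i$. $(f\cup g)_|=1$, $(f\cup g)_\tau(x_1,\dots,x_n)=g_k((g\cup f)_{\tau_1}(x_1,\dots,x_{j_1-1})x_{j_1},\dots,(g\cup f)_{\tau_k}(x_{j_{k-1}+1},\dots,x_{j_k-1})x_{j_k})$.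 $R(|)=|$, $R(\sigma\vee\tau)=(|\vee R(\sigma))\vee R(\tau)$. $(f\boxtimes g)_0=g_0$, $(f\boxtimes g)_n(x_1,\dots,x_n)=\sum_{\tau\in Y_n}(f\cup g)_{R(\tau)}(x_1,1,\dots,x_n,1)$; $(f\boxtimes_1 g)_0=0$, $(f\boxtimes_1 g)_n(x_1,\dots,x_n)=\sum_{\tau\in Y_{n-1}}(g\cup f)_{|\vee R(\tau)}(x_1,1,x_2,1,\dots,1,x_n)$ for $n\ge1$. *)

theory Defs
  imports Complex_Main
begin

definition unital_algebra :: "('k::field_char_0 \<Rightarrow> 'b::ring_1 \<Rightarrow> 'b) \<Rightarrow> bool" where
  "unital_algebra smul \<longleftrightarrow> Vector_Spaces.vector_space smul \<and>
     (\<forall>a x y. smul a (x * y) = smul a x * y \<and> smul a (x * y) = x * smul a y)"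

text \<open>Invertible elements B^x (B need not be commutative).\<close>
definition unit_of :: "'b::ring_1 \<Rightarrow> bool" where
  "unit_of x \<longleftrightarrow> (\<exists>y. x * y = 1 \<and> y * x = 1)"

text \<open>A sequence f = (f_n) is modelled as f :: nat => 'b list => 'b; f n is applied to
argument lists of length n (values on other lengths are irrelevant).\<close>

definition multilinear :: "('k::field_char_0 \<Rightarrow> 'b::ring_1 \<Rightarrow> 'b) \<Rightarrow> nat \<Rightarrow> ('b list \<Rightarrow> 'b) \<Rightarrow> bool" where
  "multilinear smul n F \<longleftrightarrow>
     (\<forall>i<n. \<forall>xs. length xs = n \<longrightarrow> Vector_Spaces.linear smul smul (\<lambda>x. F (xs[i := x])))"

definition in_Mult :: "('k::field_char_0 \<Rightarrow> 'b::ring_1 \<Rightarrow> 'b) \<Rightarrow> (nat \<Rightarrow> 'b list \<Rightarrow> 'b) \<Rightarrow> bool" where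
  "in_Mult smul f \<longleftrightarrow> (\<forall>n. multilinear smul n (f n))"

definition mult_prod :: "(nat \<Rightarrow> 'b::ring_1 list \<Rightarrow> 'b) \<Rightarrow> (nat \<Rightarrow> 'b list \<Rightarrow> 'b) \<Rightarrow> nat \<Rightarrow> 'b list \<Rightarrow> 'b" where
  "mult_prod f g n xs = (\<Sum>k = 0..n. f k (take k xs) * g (n - k) (drop k xs))"

definition unitI :: "nat \<Rightarrow> 'b::ring_1 list \<Rightarrow> 'b" where
  "unitI n xs = (if n = 1 then hd xs else 0)"

definition G_inv :: "('k::field_char_0 \<Rightarrow> 'b::ring_1 \<Rightarrow> 'b) \<Rightarrow> (nat \<Rightarrow> 'b list \<Rightarrow> 'b) \<Rightarrow> bool" where
  "G_inv smul F \<longleftrightarrow> in_Mult smul F \<and> unit_of (F 0 [])"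

text \<open>G_B^I = { I . F : F in G_B^inv } (equality of sequences = equality of each f_n on
argument lists of length n).\<close>
definition G_I :: "('k::field_char_0 \<Rightarrow> 'b::ring_1 \<Rightarrow> 'b) \<Rightarrow> (nat \<Rightarrow> 'b list \<Rightarrow> 'b) \<Rightarrow> bool" where
  "G_I smul f \<longleftrightarrow> (\<exists>F. G_inv smul F \<and>
      (\<forall>n xs. length xs = n \<longrightarrow> f n xs = mult_prod unitI F n xs))"

text \<open>Leaf is the tree |, Node s t is s \<or> t.\<close>
datatype ptree = Leaf | Node ptree ptree

fun nodes :: "ptree \<Rightarrow> nat" where
  "nodes Leaf = 0"
| "nodes (Node s t) = nodes s + nodes t + 1"

definition Y :: "nat \<Rightarrow> ptree set" where
  "Y n = {t. nodes t = n}"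

text \<open>Right-spine decomposition: t = t_1 \<or> (t_2 \<or> (... \<or> (t_k \<or> |))).\<close>
fun spine :: "ptree \<Rightarrow> ptree list" where
  "spine Leaf = []"
| "spine (Node s t) = s # spine t"

text \<open>The auxiliary cup_args f g t xs computes the list
[ (g \<union> f)_{t_1}(x_1..x_{j_1-1}) x_{j_1}, ..., (g \<union> f)_{t_k}(...) x_{j_k} ] along the
right spine of t.\<close>
fun cup :: "(nat \<Rightarrow> 'b::ring_1 list \<Rightarrow> 'b) \<Rightarrow> (nat \<Rightarrow> 'b list \<Rightarrow> 'b) \<Rightarrow> ptree \<Rightarrow> 'b list \<Rightarrow> 'b"
and cup_args :: "(nat \<Rightarrow> 'b::ring_1 list \<Rightarrow> 'b) \<Rightarrow> (nat \<Rightarrow> 'b list \<Rightarrow> 'b) \<Rightarrow> ptree \<Rightarrow> 'b list \<Rightarrow> 'b list"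
where
  "cup f g Leaf xs = 1"
| "cup f g (Node s t) xs = g (length (spine (Node s t))) (cup_args f g (Node s t) xs)"
| "cup_args f g Leaf xs = []"
| "cup_args f g (Node s t) xs =
     (cup g f s (take (nodes s) xs) * xs ! nodes s) # cup_args f g t (drop (nodes s + 1) xs)"

fun R :: "ptree \<Rightarrow> ptree" where
  "R Leaf = Leaf"
| "R (Node s t) = Node (Node Leaf (R s)) (R t)"

definition interleave1 :: "'b::ring_1 list \<Rightarrow> 'b list" where
  "interleave1 xs = concat (map (\<lambda>x. [x, 1]) xs)"

definition boxtimes :: "(nat \<Rightarrow> 'b::ring_1 list \<Rightarrow> 'b) \<Rightarrow> (nat \<Rightarrow> 'b list \<Rightarrow> 'b) \<Rightarrow> nat \<Rightarrow> 'b list \<Rightarrow> 'b" where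
  "boxtimes f g n xs = (if n = 0 then g 0 []
     else (\<Sum>t\<in>Y n. cup f g (R t) (interleave1 xs)))"

definition boxtimes1 :: "(nat \<Rightarrow> 'b::ring_1 list \<Rightarrow> 'b) \<Rightarrow> (nat \<Rightarrow> 'b list \<Rightarrow> 'b) \<Rightarrow> nat \<Rightarrow> 'b list \<Rightarrow> 'b" where
  "boxtimes1 f g n xs = (if n = 0 then 0
     else (\<Sum>t\<in>Y (n - 1). cup g f (Node Leaf (R t)) (butlast (interleave1 xs))))"

end

theory Submission
  imports Defs
begin

text \<open>Membership in \<open>G\<^sub>B\<^sup>I\<close> amounts to: multilinearity, \<open>f\<^sub>0 = 0\<close>, \<open>f\<^sub>1(1)\<close> invertible and
\<open>f\<^sub>n(x\<^sub>1, \<dots>) = x\<^sub>1 f\<^sub>n(1, \<dots>)\<close>. Both products are sums over trees of nested compositions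
\<open>f \<union> g\<close>, which are multilinear because every input enters exactly one argument of the next
composition. In every tree \<open>R t\<close>, and in \<open>| \<or> R t\<close>, the leftmost input is the first argument
of an \<open>f\<close> whose value is the first argument of a \<open>g\<close> (or of nothing), so it can be pulled out
to the left. Finally, in degree one the products are \<open>g\<^sub>1 \<circ> f\<^sub>1\<close> and \<open>f\<^sub>1\<close>, whose values at
\<open>1\<close> are \<open>f\<^sub>1(1) g\<^sub>1(1)\<close> and \<open>f\<^sub>1(1)\<close>.\<close>

lemma unital_algebra_vector_space: "unital_algebra smul \<Longrightarrow> vector_space smul"
  by (simp add: unital_algebra_def)

lemma linear_mult_right:
  assumes "unital_algebra smul"
  shows "Vector_Spaces.linear smul smul (\<lambda>x. x * (c::'b::ring_1))"
  using assms unfolding Vector_Spaces.linear_iff unital_algebra_def by (auto simp: distrib_right)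

lemma linear_mult_left:
  assumes "unital_algebra smul"
  shows "Vector_Spaces.linear smul smul (\<lambda>x. (c::'b::ring_1) * x)"
  using assms unfolding Vector_Spaces.linear_iff unital_algebra_def by (auto simp: distrib_left) metis

lemma linear_compose_lambda:
  assumes "Vector_Spaces.linear s s f" "Vector_Spaces.linear s s g"
  shows "Vector_Spaces.linear s s (\<lambda>x. g (f x))"
  using Vector_Spaces.linear_compose[OF assms] by (simp add: o_def)

lemma unit_of_mult: "unit_of a \<Longrightarrow> unit_of b \<Longrightarrow> unit_of (a * b)"
  unfolding unit_of_def by (metis mult.assoc mult_1_left)

lemma multilinear_cong:
  assumes "\<And>xs. length xs = n \<Longrightarrow> F xs = G xs"
  shows "multilinear smul n F \<longleftrightarrow> multilinear smul n G"
  using assms unfolding multilinear_def by simp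

lemma multilinear_sum:
  assumes "unital_algebra smul" "\<And>t. t \<in> T \<Longrightarrow> multilinear smul n (h t)"
  shows "multilinear smul n (\<lambda>xs. \<Sum>t\<in>T. h t xs :: 'b::ring_1)"
proof -
  have vs: "vector_space_pair smul smul"
    using assms(1) by (simp add: unital_algebra_def vector_space_pair_def)
  show ?thesis
    unfolding multilinear_def
  proof (intro allI impI)
    fix i and xs :: "'b list" assume "i < n" "length xs = n"
    then show "Vector_Spaces.linear smul smul (\<lambda>x. \<Sum>t\<in>T. h t (xs[i := x]))"
      using assms(2) vector_space_pair.linear_compose_sum[OF vs, of T "\<lambda>t x. h t (xs[i := x])"]
      unfolding multilinear_def by blast
  qed
qed

text \<open>Each input slot of \<open>H: B\<^sup>n \<rightarrow> B\<^sup>k\<close> enters exactly one output slot, linearly; this is how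
the arguments of \<open>cup_args\<close> depend on the inputs of a tree.\<close>

definition slotwise_linear ::
  "('k::field \<Rightarrow> 'b::ab_group_add \<Rightarrow> 'b) \<Rightarrow> nat \<Rightarrow> nat \<Rightarrow> ('b list \<Rightarrow> 'b list) \<Rightarrow> bool" where
  "slotwise_linear smul n k H \<longleftrightarrow> (\<forall>M. length M = n \<longrightarrow> length (H M) = k \<and>
     (\<forall>j<n. \<exists>p<k. \<exists>\<phi>. Vector_Spaces.linear smul smul \<phi> \<and> (\<forall>x. H (M[j := x]) = (H M)[p := \<phi> x])))"

lemma multilinear_comp_slotwise_linear:
  assumes "slotwise_linear smul n k H" "multilinear smul k G"
  shows "multilinear smul n (\<lambda>M. G (H M))"
  unfolding multilinear_def
proof (intro allI impI)
  fix j and M :: "'b list" assume j: "j < n" and M: "length M = n"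
  obtain p \<phi> where p: "p < k" "length (H M) = k" "Vector_Spaces.linear smul smul \<phi>"
    "\<And>x. H (M[j := x]) = (H M)[p := \<phi> x]"
    using assms(1) j M unfolding slotwise_linear_def by blast
  have "Vector_Spaces.linear smul smul (\<lambda>y. G ((H M)[p := y]))"
    using assms(2) p(1,2) unfolding multilinear_def by blast
  from linear_compose_lambda[OF p(3) this] show "Vector_Spaces.linear smul smul (\<lambda>x. G (H (M[j := x])))"
    by (simp add: p(4))
qed

lemma slotwise_linear_reindex:
  assumes "vector_space smul"
    and "\<And>M. length M = n \<Longrightarrow> length (H M) = k"
    and "\<And>M j x. length M = n \<Longrightarrow> j < n \<Longrightarrow> \<sigma> j < k \<and> H (M[j := x]) = (H M)[\<sigma> j := x]"
  shows "slotwise_linear smul n k H"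
  unfolding slotwise_linear_def using assms vector_space.linear_ident[OF assms(1)] by metis

lemma slotwise_linear_Cons:
  "vector_space smul \<Longrightarrow> slotwise_linear smul n (Suc n) (Cons a)"
  by (rule slotwise_linear_reindex[where \<sigma> = Suc]) auto

lemma mult_prod_unitI_0: "mult_prod unitI F 0 xs = 0"
  by (simp add: mult_prod_def unitI_def)

lemma mult_prod_unitI_Suc: "mult_prod unitI F (Suc n) (x # xs) = x * F n xs"
proof -
  have "mult_prod unitI F (Suc n) (x # xs) = (\<Sum>k = 0..Suc n. if k = 1 then x * F n xs else 0)"
    unfolding mult_prod_def by (rule sum.cong) (auto simp: unitI_def take_Suc_Cons)
  then show ?thesis by simp
qed

lemma in_Mult_mult_prod_unitI:
  assumes ua: "unital_algebra smul" and F: "in_Mult smul F"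
  shows "in_Mult smul (mult_prod unitI F)"
  unfolding in_Mult_def multilinear_def
proof (intro allI impI)
  fix n i and xs :: "'b list" assume i: "i < n" and xs: "length xs = n"
  then obtain m y ys where n: "n = Suc m" and xs: "xs = y # ys" "length ys = m"
    by (cases xs) auto
  show "Vector_Spaces.linear smul smul (\<lambda>x. mult_prod unitI F n (xs[i := x]))"
  proof (cases i)
    case 0
    then show ?thesis using linear_mult_right[OF ua] by (simp add: n xs mult_prod_unitI_Suc)
  next
    case (Suc i')
    have "Vector_Spaces.linear smul smul (\<lambda>x. F m (ys[i' := x]))"
      using F i xs n Suc unfolding in_Mult_def multilinear_def by simp
    then show ?thesis using linear_compose_lambda[OF _ linear_mult_left[OF ua]] Suc
      by (simp add: n xs mult_prod_unitI_Suc)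
  qed
qed

text \<open>For \<open>f = I \<cdot> F\<close> the factor \<open>F\<close> is recovered as \<open>F\<^sub>n(x\<^sub>2, \<dots>) = f\<^sub>n\<^sub>+\<^sub>1(1, x\<^sub>2, \<dots>)\<close>.\<close>

definition first_arg_one :: "(nat \<Rightarrow> 'b::ring_1 list \<Rightarrow> 'b) \<Rightarrow> nat \<Rightarrow> 'b list \<Rightarrow> 'b" where
  "first_arg_one f n xs = f (Suc n) (1 # xs)"

definition factors_first_arg :: "(nat \<Rightarrow> 'b::ring_1 list \<Rightarrow> 'b) \<Rightarrow> bool" where
  "factors_first_arg f \<longleftrightarrow>
     (\<forall>n x xs. length xs = n \<longrightarrow> f (Suc n) (x # xs) = x * first_arg_one f n xs)"

lemma factors_first_argD:
  "factors_first_arg f \<Longrightarrow> length xs = n \<Longrightarrow> f (Suc n) (x # xs) = x * first_arg_one f n xs"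
  unfolding factors_first_arg_def by blast

lemma in_Mult_first_arg_one:
  assumes "unital_algebra smul" "in_Mult smul f"
  shows "in_Mult smul (first_arg_one f)"
  using assms multilinear_comp_slotwise_linear[OF slotwise_linear_Cons]
  unfolding in_Mult_def first_arg_one_def unital_algebra_def by blast

lemma G_I_iff:
  assumes ua: "unital_algebra smul"
  shows "G_I smul f \<longleftrightarrow>
    in_Mult smul f \<and> f 0 [] = 0 \<and> factors_first_arg f \<and> unit_of (f 1 [1])"
proof
  assume "G_I smul f"
  then obtain F where F: "G_inv smul F" and f: "\<And>n xs. length xs = n \<Longrightarrow> f n xs = mult_prod unitI F n xs"
    unfolding G_I_def by blast
  have f_Suc: "f (Suc n) (x # xs) = x * F n xs" if "length xs = n" for n x xs
    using f[of "x # xs"] that by (simp add: mult_prod_unitI_Suc)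
  have "in_Mult smul (mult_prod unitI F)"
    using in_Mult_mult_prod_unitI[OF ua] F unfolding G_inv_def by blast
  then have "in_Mult smul f"
    unfolding in_Mult_def using multilinear_cong[of _ "f _", OF f] by blast
  moreover have "factors_first_arg f"
    unfolding factors_first_arg_def first_arg_one_def using f_Suc by simp
  moreover have "unit_of (f 1 [1])"
    using F f_Suc[of "[]"] unfolding G_inv_def by simp
  ultimately show "in_Mult smul f \<and> f 0 [] = 0 \<and> factors_first_arg f \<and> unit_of (f 1 [1])"
    using f[of "[]"] by (simp add: mult_prod_unitI_0)
next
  assume f: "in_Mult smul f \<and> f 0 [] = 0 \<and> factors_first_arg f \<and> unit_of (f 1 [1])"
  have "G_inv smul (first_arg_one f)"
    using f in_Mult_first_arg_one[OF ua] unfolding G_inv_def first_arg_one_def by simp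
  moreover have "f n xs = mult_prod unitI (first_arg_one f) n xs" if "length xs = n" for n xs
    using f that unfolding factors_first_arg_def
    by (cases xs) (auto simp: mult_prod_unitI_0 mult_prod_unitI_Suc)
  ultimately show "G_I smul f" unfolding G_I_def by blast
qed

lemma interleave1_simps [simp]:
  "interleave1 [] = []" "interleave1 (x # xs) = x # 1 # interleave1 xs"
  by (simp_all add: interleave1_def)

lemma length_interleave1 [simp]: "length (interleave1 xs) = 2 * length xs"
  by (induction xs) auto

lemma interleave1_update:
  "i < length xs \<Longrightarrow> interleave1 (xs[i := x]) = (interleave1 xs)[2 * i := x]"
  by (induction xs arbitrary: i) (auto split: nat.split)

lemma slotwise_linear_interleave1:
  "vector_space smul \<Longrightarrow> slotwise_linear smul n (2 * n) interleave1"
  by (rule slotwise_linear_reindex[where \<sigma> = "\<lambda>j. 2 * j"]) (auto simp: interleave1_update)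

lemma slotwise_linear_butlast_interleave1:
  "vector_space smul \<Longrightarrow> slotwise_linear smul n (2 * n - 1) (\<lambda>xs. butlast (interleave1 xs))"
  by (rule slotwise_linear_reindex[where \<sigma> = "\<lambda>j. 2 * j"])
    (auto simp: interleave1_update butlast_list_update)

lemma length_cup_args [simp]: "length (cup_args f g t xs) = length (spine t)"
  by (induction t arbitrary: xs) auto

lemma slotwise_linear_cup_args_Node:
  assumes ua: "unital_algebra smul"
    and s: "multilinear smul (nodes s) (cup g f s)"
    and u: "slotwise_linear smul (nodes u) (length (spine u)) (cup_args f g u)"
  shows "slotwise_linear smul (nodes (Node s u)) (length (spine (Node s u))) (cup_args f g (Node s u))"
  unfolding slotwise_linear_def
proof (intro allI impI conjI)
  fix M :: "'b list" and j assume M: "length M = nodes (Node s u)" and j: "j < nodes (Node s u)"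
  let ?t = "Node s u"
  consider "j < nodes s" | "j = nodes s" | "nodes s < j" by linarith
  then show "\<exists>p<length (spine ?t). \<exists>\<phi>. Vector_Spaces.linear smul smul \<phi> \<and>
      (\<forall>x. cup_args f g ?t (M[j := x]) = (cup_args f g ?t M)[p := \<phi> x])"
  proof cases
    case 1
    let ?\<phi> = "\<lambda>x. cup g f s ((take (nodes s) M)[j := x]) * M ! nodes s"
    have "Vector_Spaces.linear smul smul (\<lambda>x. cup g f s ((take (nodes s) M)[j := x]))"
      using s 1 M unfolding multilinear_def by simp
    then have "Vector_Spaces.linear smul smul ?\<phi>"
      using linear_compose_lambda[OF _ linear_mult_right[OF ua]] by blast
    moreover have "cup_args f g ?t (M[j := x]) = (cup_args f g ?t M)[0 := ?\<phi> x]" for x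
      using 1 by (simp add: take_update_swap)
    moreover have "0 < length (spine ?t)" by simp
    ultimately show ?thesis by blast
  next
    case 2
    let ?\<phi> = "\<lambda>x. cup g f s (take (nodes s) M) * x"
    have "cup_args f g ?t (M[j := x]) = (cup_args f g ?t M)[0 := ?\<phi> x]" for x
      using 2 M by simp
    moreover have "0 < length (spine ?t)" by simp
    ultimately show ?thesis using linear_mult_left[OF ua] by blast
  next
    case 3
    let ?j = "j - Suc (nodes s)" and ?M = "drop (Suc (nodes s)) M"
    obtain p \<phi> where p: "p < length (spine u)" "Vector_Spaces.linear smul smul \<phi>"
      "\<And>x. cup_args f g u (?M[?j := x]) = (cup_args f g u ?M)[p := \<phi> x]"
    proof -
      have "?j < nodes u" "length ?M = nodes u" using 3 j M by auto
      then show ?thesis using u that unfolding slotwise_linear_def by blast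
    qed
    have "cup_args f g ?t (M[j := x]) = (cup_args f g ?t M)[Suc p := \<phi> x]" for x
      using 3 p(3)[of x] by (simp add: drop_update_swap)
    moreover have "Suc p < length (spine ?t)" using p(1) by simp
    ultimately show ?thesis using p(2) by blast
  qed
qed simp

lemma multilinear_cup:
  assumes ua: "unital_algebra smul" and "in_Mult smul f" "in_Mult smul g"
  shows "multilinear smul (nodes t) (cup f g t)"
proof -
  have "multilinear smul (nodes t) (cup f g t) \<and>
      slotwise_linear smul (nodes t) (length (spine t)) (cup_args f g t)"
    if "in_Mult smul f" "in_Mult smul g" for f g :: "nat \<Rightarrow> 'b list \<Rightarrow> 'b"
    using that
  proof (induction t arbitrary: f g)
    case Leaf
    then show ?case by (simp add: multilinear_def slotwise_linear_def)
  next
    case (Node s u)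
    have args: "slotwise_linear smul (nodes (Node s u)) (length (spine (Node s u)))
        (cup_args f g (Node s u))"
      using slotwise_linear_cup_args_Node[OF ua] Node by blast
    have "multilinear smul (nodes (Node s u))
        (\<lambda>M. g (length (spine (Node s u))) (cup_args f g (Node s u) M))"
      using multilinear_comp_slotwise_linear[OF args] Node.prems(2) unfolding in_Mult_def by blast
    then show ?case using args by (simp del: spine.simps cup_args.simps length_cup_args)
  qed
  with assms show ?thesis by blast
qed

lemma nodes_R [simp]: "nodes (R t) = 2 * nodes t"
  by (induction t) auto

lemma Y_0: "Y 0 = {Leaf}"
  unfolding Y_def by (auto elim: nodes.elims)

lemma Y_1: "Y (Suc 0) = {Node Leaf Leaf}"
  unfolding Y_def by (auto elim!: nodes.elims)

lemma Leaf_notin_Y_Suc: "Leaf \<notin> Y (Suc n)"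
  by (simp add: Y_def)

lemma in_Mult_boxtimes:
  assumes ua: "unital_algebra smul" and f: "in_Mult smul f" and g: "in_Mult smul g"
  shows "in_Mult smul (boxtimes f g)"
  unfolding in_Mult_def
proof
  fix n
  have "multilinear smul n (\<lambda>xs. \<Sum>t\<in>Y n. cup f g (R t) (interleave1 xs))"
  proof (rule multilinear_sum[OF ua])
    fix t assume "t \<in> Y n"
    then have "multilinear smul (2 * n) (cup f g (R t))"
      using multilinear_cup[OF ua f g, of "R t"] by (simp add: Y_def)
    then show "multilinear smul n (\<lambda>xs. cup f g (R t) (interleave1 xs))"
      using multilinear_comp_slotwise_linear slotwise_linear_interleave1
        unital_algebra_vector_space[OF ua] by blast
  qed
  then show "multilinear smul n (boxtimes f g n)"
    by (cases "n = 0") (simp_all add: multilinear_def boxtimes_def)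
qed

lemma in_Mult_boxtimes1:
  assumes ua: "unital_algebra smul" and f: "in_Mult smul f" and g: "in_Mult smul g"
  shows "in_Mult smul (boxtimes1 f g)"
  unfolding in_Mult_def
proof
  fix n
  have "multilinear smul n
      (\<lambda>xs. \<Sum>t\<in>Y (n - 1). cup g f (Node Leaf (R t)) (butlast (interleave1 xs)))"
    if "n \<noteq> 0"
  proof (rule multilinear_sum[OF ua])
    fix t assume "t \<in> Y (n - 1)"
    then have "nodes (Node Leaf (R t)) = 2 * n - 1"
      using \<open>n \<noteq> 0\<close> by (simp add: Y_def)
    then have "multilinear smul (2 * n - 1) (cup g f (Node Leaf (R t)))"
      using multilinear_cup[OF ua g f, of "Node Leaf (R t)"] by simp
    then show "multilinear smul n (\<lambda>xs. cup g f (Node Leaf (R t)) (butlast (interleave1 xs)))"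
      using multilinear_comp_slotwise_linear slotwise_linear_butlast_interleave1
        unital_algebra_vector_space[OF ua] by blast
  qed
  then show "multilinear smul n (boxtimes1 f g n)"
    by (cases "n = 0") (simp_all add: multilinear_def boxtimes1_def)
qed

lemma cup_R_Node_Cons:
  assumes "factors_first_arg f" "factors_first_arg g"
  shows "cup f g (R (Node s u)) (x # xs) = x * cup f g (R (Node s u)) (1 # xs)"
  by (simp add: factors_first_argD[OF assms(1)] factors_first_argD[OF assms(2)] mult.assoc)

lemma factors_first_arg_boxtimes:
  assumes "factors_first_arg f" "factors_first_arg g"
  shows "factors_first_arg (boxtimes f g)"
  unfolding factors_first_arg_def first_arg_one_def
proof (intro allI impI)
  fix n x and xs :: "'a list"
  have "cup f g (R t) (interleave1 (x # xs)) = x * cup f g (R t) (interleave1 (1 # xs))"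
    if t: "t \<in> Y (Suc n)" for t
  proof -
    obtain s u where "t = Node s u" using t Leaf_notin_Y_Suc by (cases t) auto
    then show ?thesis
      using cup_R_Node_Cons[OF assms, of s u x "1 # interleave1 xs"] by (simp only: interleave1_simps)
  qed
  then show "boxtimes f g (Suc n) (x # xs) = x * boxtimes f g (Suc n) (1 # xs)"
    unfolding boxtimes_def by (simp add: sum_distrib_left del: interleave1_simps)
qed

lemma factors_first_arg_boxtimes1:
  assumes "factors_first_arg f"
  shows "factors_first_arg (boxtimes1 f g)"
  unfolding factors_first_arg_def first_arg_one_def boxtimes1_def
  by (simp add: factors_first_argD[OF assms] sum_distrib_left mult.assoc)

lemma boxtimes_1: "boxtimes f g 1 [x] = g 1 [f 1 [x]]"
  by (simp add: boxtimes_def Y_1)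

lemma boxtimes1_1: "boxtimes1 f g 1 [x] = f 1 [x]"
  by (simp add: boxtimes1_def Y_0)

theorem lemma3:
  fixes smul :: "'k::field_char_0 \<Rightarrow> 'b::ring_1 \<Rightarrow> 'b"
    and f g :: "nat \<Rightarrow> 'b list \<Rightarrow> 'b"
  assumes "unital_algebra smul"
    and "G_I smul f" and "G_I smul g"
  shows "G_I smul (boxtimes f g) \<and> G_I smul (boxtimes1 f g)"
proof -
  note G_I = G_I_iff[OF assms(1)]
  have f: "in_Mult smul f" "f 0 [] = 0" "factors_first_arg f" "unit_of (f 1 [1])"
    using assms(2) G_I by blast+
  have g: "in_Mult smul g" "g 0 [] = 0" "factors_first_arg g" "unit_of (g 1 [1])"
    using assms(3) G_I by blast+
  have "boxtimes f g 0 [] = 0"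
    using g(2) by (simp add: boxtimes_def)
  moreover have "boxtimes f g 1 [1] = f 1 [1] * g 1 [1]"
    using factors_first_argD[OF g(3), of "[]" 0 "f 1 [1]"]
    unfolding boxtimes_1 by (simp add: first_arg_one_def)
  ultimately have "G_I smul (boxtimes f g)"
    using G_I in_Mult_boxtimes[OF assms(1) f(1) g(1)] factors_first_arg_boxtimes[OF f(3) g(3)]
      unit_of_mult[OF f(4) g(4)] by metis
  moreover have "G_I smul (boxtimes1 f g)"
    using G_I in_Mult_boxtimes1[OF assms(1) f(1) g(1)] factors_first_arg_boxtimes1[OF f(3)]
      boxtimes1_1[of f g 1] f(4) by (metis boxtimes1_def)
  ultimately show ?thesis ..
qed

end
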